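(* Let $X$ be a random variable with values in $\{0,1,2,\dots\}$ with finite variance and mean $\mu=\mathrm{E}[X]>0$, and let $X_1,\dots,X_n$ be i.i.d. copies of $X$. With $\overline X_n$ the sample mean, $F_n(k)=\frac1n\sum_{i=1}^nI(X_i\le k)$, $f_k(m)=e^{-m}\sum_{j=0}^k\frac{m^j}{j!}$, $$\widetilde\sigma^2_{n,k}=e^{-2\overline X_n}\Big\{\Big(\sum_{j=0}^k\frac{\overline X_n^j}{j!}\Big)\Big(e^{\overline X_n}-\sum_{j=0}^k\frac{\overline X_n^j}{j!}\Big)-\frac{\overline X_n^{2k+1}}{(k!)^2}\Big\},$$ $\widetilde\sigma_{n,k}=\sqrt{\widetilde\sigma^2_{n,k}}$, define $$k_n^*=\min\Big\{k\ge 0:\ I(\overline X_n\ge 1)\,\frac{\widetilde\sigma_{n,k}}{f_k^2(\overline X_n)\sqrt n}\le e\Big\},\qquad W_n=\frac{\sqrt n\,\{f_{k_n^*}(\overline X_n)-F_n(k_n^* )\}}{\widetilde\sigma_{n,k_n^*}}.$$ If $X$ is Poisson with parameter $\mu$ (hypothesis $H_0$), then $W_n$ converges in distribution to $\mathcal N(0,1)$ as $n\to\infty$. If the distribution of $X$ belongs to $\Delta$ and is not Poisson (hypothesis $H_1$), then $|W_n|$ converges in probability to $\infty$.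
   Context: $\Delta$ denotes the class of distributions of random variables $X$ with values in $\{0,1,2,\dots\}$ such that, for every $\mu>0$, the function $t\mapsto \Psi_X'(t)-\mu\Psi_X(t)$ is either nonnegative for all $t\in[0,1]$ or nonpositive for all $t\in[0,1]$, where $\Psi_X(t)=\mathrm{E}[t^X]$. $I(\cdot)$ is the indicator function. *)

theory Defs
  imports "HOL-Probability.Probability"
begin

definition pgf :: "nat pmf \<Rightarrow> real \<Rightarrow> real" where
  "pgf p t = (\<Sum>k. pmf p k * t ^ k)"

definition pgf_deriv :: "nat pmf \<Rightarrow> real \<Rightarrow> real" where
  "pgf_deriv p t = (\<Sum>k. real (Suc k) * pmf p (Suc k) * t ^ k)"

definition in_Delta :: "nat pmf \<Rightarrow> bool" where
  "in_Delta p \<longleftrightarrow> (\<forall>\<mu>>0. (\<forall>t\<in>{0..1}. pgf_deriv p t - \<mu> * pgf p t \<ge> 0)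
                          \<or> (\<forall>t\<in>{0..1}. pgf_deriv p t - \<mu> * pgf p t \<le> 0))"

definition sample_mean :: "(nat \<Rightarrow> 'a \<Rightarrow> nat) \<Rightarrow> nat \<Rightarrow> 'a \<Rightarrow> real" where
  "sample_mean X n \<omega> = (\<Sum>i<n. real (X i \<omega>)) / real n"

definition emp_cdf :: "(nat \<Rightarrow> 'a \<Rightarrow> nat) \<Rightarrow> nat \<Rightarrow> nat \<Rightarrow> 'a \<Rightarrow> real" where
  "emp_cdf X n k \<omega> = (\<Sum>i<n. if X i \<omega> \<le> k then 1 else 0) / real n"

definition fk :: "nat \<Rightarrow> real \<Rightarrow> real" where
  "fk k m = exp (- m) * (\<Sum>j\<le>k. m ^ j / fact j)"

definition sig2 :: "nat \<Rightarrow> real \<Rightarrow> real" where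
  "sig2 k m = exp (- 2 * m) *
     ((\<Sum>j\<le>k. m ^ j / fact j) * (exp m - (\<Sum>j\<le>k. m ^ j / fact j))
      - m ^ (2 * k + 1) / (fact k)\<^sup>2)"

definition kstar :: "nat \<Rightarrow> real \<Rightarrow> nat" where
  "kstar n m = (LEAST k. (if m \<ge> 1 then 1 else 0) * sqrt (sig2 k m)
                           / ((fk k m)\<^sup>2 * sqrt (real n)) \<le> exp 1)"

definition W_stat :: "(nat \<Rightarrow> 'a \<Rightarrow> nat) \<Rightarrow> nat \<Rightarrow> 'a \<Rightarrow> real" where
  "W_stat X n \<omega> =
     (let m = sample_mean X n \<omega>; k = kstar n m in
      sqrt (real n) * (fk k m - emp_cdf X n k \<omega>) / sqrt (sig2 k m))"

definition abs_tends_to_infinity_in_prob :: "'a measure \<Rightarrow> (nat \<Rightarrow> 'a \<Rightarrow> real) \<Rightarrow> bool" where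
  "abs_tends_to_infinity_in_prob M Y \<longleftrightarrow>
     (\<forall>C::real. (\<lambda>n. measure M {\<omega> \<in> space M. \<bar>Y n \<omega>\<bar> \<le> C}) \<longlonglongrightarrow> 0)"

end

(*
  For sqrt n >= exp (2 Xbar_n) the defining inequality of k*_n already holds at k = 0, so with
  probability tending to one W_n = sqrt n (exp (- Xbar_n) - F_n(0)) / sigma~_{n,0}.

  Under H0, linearising exp (- Xbar_n) at mu turns the numerator into sqrt n times the sample mean
  of the centred variables exp (- mu) (1 + mu - X_i) - I(X_i = 0), whose variance is
  exp (- 2 mu) (exp mu - 1 - mu) = sigma~^2_0(mu). The central limit theorem and Slutsky's lemma give
  asymptotic normality; Chebyshev's inequality at deviations of order n^(-1/4) shows that the
  linearisation error and the estimated standard deviation do not matter.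

  Under H1, exp (- Xbar_n) - F_n(0) tends in probability to exp (- mu) - P(X = 0), which is nonzero:
  if P(X = 0) = exp (- mu) for a law in Delta, then exp (- mu t) Psi_X(t) is monotone on [0, 1] and
  equal to exp (- mu) at both ends, hence constant, so Psi_X(t) = exp (mu (t - 1)) and X is Poisson.
  Thus |W_n| grows like sqrt n.
*)
theory Submission
  imports Defs "HOL-Real_Asymp.Real_Asymp"
begin

section \<open>Real analysis\<close>

lemma powser_zero_on_unit_interval_imp_coeff_zero:
  fixes c :: "nat \<Rightarrow> real"
  assumes "summable c" and vanish: "\<And>t. 0 < t \<Longrightarrow> t < 1 \<Longrightarrow> (\<lambda>k. c k * t ^ k) sums 0"
  shows "c j = 0"
proof (induction j rule: less_induct)
  case (less j)
  define F where "F t = (\<Sum>k. c (k + j) * t ^ k)" for t :: real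
  have F_eq_0: "F t = 0" if "0 < t" "t < 1" for t
  proof -
    have "(\<lambda>k. c (k + j) * t ^ (k + j)) sums (0 - (\<Sum>i<j. c i * t ^ i))"
      using sums_split_initial_segment[OF vanish[OF that], of j] by simp
    then have "(\<lambda>k. c (k + j) * t ^ k * t ^ j) sums 0"
      using less by (simp add: power_add mult.assoc)
    then have "(\<lambda>k. c (k + j) * t ^ k * t ^ j / t ^ j) sums (0 / t ^ j)"
      by (rule sums_divide)
    then show ?thesis
      using that unfolding F_def by (simp add: sums_iff)
  qed
  have "isCont F 0"
    unfolding F_def using summable_ignore_initial_segment[OF \<open>summable c\<close>, of j]
    by (intro isCont_powser[where K = 1]) auto
  then have "(F \<longlongrightarrow> F 0) (at_right 0)"
    by (simp add: isCont_def filterlim_at_split)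
  moreover have "(F \<longlongrightarrow> 0) (at_right 0)"
  proof (rule Lim_transform_eventually[of "\<lambda>_. 0"])
    show "\<forall>\<^sub>F t in at_right 0. 0 = F t"
      unfolding eventually_at_right_field by (intro exI[of _ 1]) (auto simp: F_eq_0)
  qed simp
  ultimately have "F 0 = 0"
    by (rule tendsto_unique[rotated]) simp
  then show ?case
    unfolding F_def by simp
qed

lemma constant_if_DERIV_sign_constant:
  fixes f f' :: "real \<Rightarrow> real"
  assumes cont: "continuous_on {a..b} f"
    and deriv: "\<And>x. a < x \<Longrightarrow> x < b \<Longrightarrow> DERIV f x :> f' x"
    and sign: "(\<forall>x\<in>{a<..<b}. 0 \<le> f' x) \<or> (\<forall>x\<in>{a<..<b}. f' x \<le> 0)"
    and ends: "f a = f b" and x: "a \<le> x" "x \<le> b"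
  shows "f x = f a"
  using sign
proof
  assume nonneg: "\<forall>x\<in>{a<..<b}. 0 \<le> f' x"
  have "f u \<le> f v" if "a \<le> u" "u \<le> v" "v \<le> b" for u v
    using that nonneg
    by (intro DERIV_nonneg_imp_increasing_open[OF \<open>u \<le> v\<close> _ continuous_on_subset[OF cont]])
       (auto intro!: exI[of _ "f' _"] deriv)
  from this[of a x] this[of x b] x ends show ?thesis by simp
next
  assume nonpos: "\<forall>x\<in>{a<..<b}. f' x \<le> 0"
  have "f v \<le> f u" if "a \<le> u" "u \<le> v" "v \<le> b" for u v
    using that nonpos
    by (intro DERIV_nonpos_imp_decreasing_open[OF \<open>u \<le> v\<close> _ continuous_on_subset[OF cont]])
       (auto intro!: exI[of _ "f' _"] deriv)
  from this[of a x] this[of x b] x ends show ?thesis by simp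
qed

lemma exp_Maclaurin_2:
  fixes x :: real
  obtains t where "\<bar>t\<bar> \<le> \<bar>x\<bar>" "exp x = 1 + x + exp t / 2 * x\<^sup>2"
  using Maclaurin_exp_le[of x 2] by (auto simp: eval_nat_numeral)

lemma abs_exp_minus_one_minus_le:
  fixes x :: real
  assumes "\<bar>x\<bar> \<le> 1"
  shows "\<bar>exp x - 1 - x\<bar> \<le> 2 * x\<^sup>2"
proof -
  obtain t where t: "\<bar>t\<bar> \<le> \<bar>x\<bar>" "exp x = 1 + x + exp t / 2 * x\<^sup>2"
    by (rule exp_Maclaurin_2)
  have "exp t \<le> exp 1"
    using t(1) assms by simp
  then have "exp t \<le> 4"
    using exp_le by linarith
  then have "exp t * x\<^sup>2 \<le> 4 * x\<^sup>2"
    by (intro mult_right_mono) auto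
  then show ?thesis
    using t(2) by (simp add: abs_mult)
qed

lemma abs_exp_neg_diff_le:
  fixes a b :: real
  assumes "0 \<le> a" "0 \<le> b"
  shows "\<bar>exp (- a) - exp (- b)\<bar> \<le> \<bar>a - b\<bar>"
proof -
  have *: "exp (- a) - exp (- b) \<le> b - a" if "0 \<le> a" "a \<le> b" for a b :: real
  proof -
    have "exp (- a) - exp (- b) = exp (- a) * (1 - exp (- (b - a)))"
      by (simp add: algebra_simps flip: exp_add)
    also have "\<dots> \<le> 1 * (b - a)"
    proof (rule mult_mono)
      show "1 - exp (- (b - a)) \<le> b - a"
        using exp_ge_add_one_self[of "- (b - a)"] by linarith
    qed (use that in auto)
    finally show ?thesis by simp
  qed
  show ?thesis
    using *[of a b] *[of b a] assms by (cases "a \<le> b") auto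
qed

lemma abs_exp_neg_tangent_error_le:
  fixes m \<mu> :: real
  assumes "0 \<le> \<mu>" "\<bar>m - \<mu>\<bar> \<le> 1"
  shows "\<bar>exp (- m) - exp (- \<mu>) * (1 + \<mu> - m)\<bar> \<le> 2 * (m - \<mu>)\<^sup>2"
proof -
  have "exp (- m) - exp (- \<mu>) * (1 + \<mu> - m) = exp (- \<mu>) * (exp (\<mu> - m) - 1 - (\<mu> - m))"
    by (simp add: algebra_simps flip: exp_add)
  then have "\<bar>exp (- m) - exp (- \<mu>) * (1 + \<mu> - m)\<bar> = exp (- \<mu>) * \<bar>exp (\<mu> - m) - 1 - (\<mu> - m)\<bar>"
    by (simp add: abs_mult)
  also have "\<dots> \<le> 1 * (2 * (\<mu> - m)\<^sup>2)"
    using assms abs_exp_minus_one_minus_le[of "\<mu> - m"] by (intro mult_mono) (auto simp: abs_minus_commute)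
  finally show ?thesis
    by (simp add: power2_commute)
qed

lemma DERIV_local_Lipschitz:
  fixes f :: "real \<Rightarrow> real"
  assumes "DERIV f x :> D"
  obtains r where "0 < r" "\<And>y. \<bar>y - x\<bar> < r \<Longrightarrow> \<bar>f y - f x\<bar> \<le> (\<bar>D\<bar> + 1) * \<bar>y - x\<bar>"
proof -
  have "(\<lambda>h. (f (x + h) - f x) / h) \<midarrow>0\<rightarrow> D"
    using assms by (simp add: DERIV_def)
  from LIM_D[OF this, of 1] obtain r where r: "0 < r"
    "\<And>h. h \<noteq> 0 \<Longrightarrow> \<bar>h\<bar> < r \<Longrightarrow> \<bar>(f (x + h) - f x) / h - D\<bar> < 1"
    by auto
  have "\<bar>f y - f x\<bar> \<le> (\<bar>D\<bar> + 1) * \<bar>y - x\<bar>" if "\<bar>y - x\<bar> < r" for y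
  proof (cases "y = x")
    case False
    then have "\<bar>(f y - f x) / (y - x) - D\<bar> < 1"
      using r(2)[of "y - x"] that by simp
    then have "\<bar>f y - f x\<bar> / \<bar>y - x\<bar> \<le> \<bar>D\<bar> + 1"
      using abs_triangle_ineq2[of "(f y - f x) / (y - x)" D] by (simp add: abs_divide)
    then show ?thesis
      using False by (simp add: divide_le_eq mult.commute)
  qed simp
  with r(1) that show thesis
    by blast
qed

lemma isCont_below_on_right:
  fixes f :: "real \<Rightarrow> real"
  assumes "isCont f x" "f x < b"
  obtains y where "x < y" "f y < b"
proof -
  have "(f \<longlongrightarrow> f x) (at_right x)"
    using assms(1) by (simp add: isCont_def filterlim_at_split)
  with assms(2) have "\<forall>\<^sub>F y in at_right x. x < y \<and> f y < b"
    by (intro eventually_conj eventually_at_right_less order_tendstoD(2))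
  with that show thesis
    using eventually_happens'[OF trivial_limit_at_right_real] by blast
qed

lemma isCont_above_on_left:
  fixes f :: "real \<Rightarrow> real"
  assumes "isCont f x" "a < f x"
  obtains y where "y < x" "a < f y"
proof -
  have "(f \<longlongrightarrow> f x) (at_left x)"
    using assms(1) by (simp add: isCont_def filterlim_at_split)
  moreover have "\<forall>\<^sub>F y in at_left x. y < x"
    by (simp add: eventually_at_filter)
  ultimately have "\<forall>\<^sub>F y in at_left x. y < x \<and> a < f y"
    using assms(2) by (intro eventually_conj order_tendstoD(1))
  with that show thesis
    using eventually_happens'[OF trivial_limit_at_left_real] by blast
qed

section \<open>Generating functions and the class Delta\<close>

lemma pmf_nat_sums_one: "(\<lambda>k. pmf p k) sums 1"
  for p :: "nat pmf"
proof -
  have "integrable (count_space UNIV) (pmf p)"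
    by (simp add: integrable_pmf)
  from sums_integral_count_space_nat[OF this] show ?thesis
    by (simp add: integral_pmf)
qed

lemma sums_expectation_pmf_nat:
  fixes p :: "nat pmf" and f :: "nat \<Rightarrow> real"
  assumes "integrable (measure_pmf p) f"
  shows "(\<lambda>k. pmf p k * f k) sums measure_pmf.expectation p f"
proof -
  have "integrable (count_space UNIV) (\<lambda>k. pmf p k * f k)"
    using assms by (simp add: measure_pmf_eq_density integrable_density)
  from sums_integral_count_space_nat[OF this] show ?thesis
    by (simp add: measure_pmf_eq_density integral_density)
qed

lemma pgf_sums:
  assumes "\<bar>t\<bar> \<le> 1"
  shows "(\<lambda>k. pmf p k * t ^ k) sums pgf p t"
proof -
  have "summable (\<lambda>k. pmf p k * t ^ k)"
    using assms
    by (intro summable_comparison_test[OF _ pmf_nat_sums_one[of p, THEN sums_summable]])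
       (auto simp: abs_mult power_abs intro!: exI[of _ 0] mult_left_le power_le_one)
  then show ?thesis
    unfolding pgf_def by (simp add: summable_sums)
qed

lemma pgf_0: "pgf p 0 = pmf p 0"
  unfolding pgf_def by (metis powser_zero)

lemma continuous_on_pgf: "continuous_on {0..1} (pgf p)"
proof -
  have "uniform_limit {0..1} (\<lambda>n t. \<Sum>k<n. pmf p k * t ^ k) (pgf p) sequentially"
    unfolding pgf_def[abs_def]
    by (rule Weierstrass_m_test[where M = "pmf p"])
       (auto simp: abs_mult intro!: mult_left_le power_le_one pmf_nat_sums_one[THEN sums_summable])
  then show ?thesis
    by (rule uniform_limit_theorem[rotated]) (auto intro!: always_eventually continuous_intros)
qed

lemma pgf_has_real_derivative:
  assumes "\<bar>t\<bar> < 1"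
  shows "(pgf p has_real_derivative pgf_deriv p t) (at t)"
proof -
  have "summable (\<lambda>k. pmf p k * 1 ^ k)"
    using pmf_nat_sums_one[THEN sums_summable] by simp
  from termdiffs_strong[OF this, of t] assms show ?thesis
    unfolding pgf_def[abs_def] pgf_deriv_def diffs_def by simp
qed

lemma in_Delta_pgf_eq_exp:
  assumes "in_Delta p" "\<mu> > 0" "pmf p 0 = exp (- \<mu>)" "0 \<le> t" "t \<le> 1"
  shows "pgf p t = exp (\<mu> * (t - 1))"
proof -
  define h where "h t = exp (- \<mu> * t) * pgf p t" for t
  define h' where "h' t = exp (- \<mu> * t) * (pgf_deriv p t - \<mu> * pgf p t)" for t
  have "continuous_on {0..1} h"
    unfolding h_def by (intro continuous_intros continuous_on_pgf)
  moreover have "DERIV h t :> h' t" if "0 < t" "t < 1" for t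
    using that unfolding h_def h'_def
    by (auto intro!: derivative_eq_intros pgf_has_real_derivative simp: algebra_simps)
  moreover have "(\<forall>t\<in>{0<..<1}. 0 \<le> h' t) \<or> (\<forall>t\<in>{0<..<1}. h' t \<le> 0)"
    using assms(1,2) unfolding in_Delta_def h'_def
    by (fastforce simp: zero_le_mult_iff mult_le_0_iff)
  moreover have "h 0 = h 1"
    using assms(3) pgf_sums[of 1 p] pmf_nat_sums_one[of p]
    by (simp add: h_def pgf_0 sums_unique2)
  ultimately have "h t = h 0"
    using assms(4,5) by (rule constant_if_DERIV_sign_constant)
  then show ?thesis
    using assms(3) by (simp add: h_def pgf_0 exp_diff exp_minus field_simps)
qed

lemma in_Delta_imp_poisson:
  assumes "in_Delta p" "\<mu> > 0" "pmf p 0 = exp (- \<mu>)"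
  shows "p = poisson_pmf \<mu>"
proof (rule pmf_eqI)
  define c where "c k = pmf p k - pmf (poisson_pmf \<mu>) k" for k
  have poisson_sums: "(\<lambda>k. pmf (poisson_pmf \<mu>) k * t ^ k) sums exp (\<mu> * (t - 1))" for t
  proof -
    have "(\<lambda>k. exp (- \<mu>) * ((\<mu> * t) ^ k /\<^sub>R fact k)) sums (exp (- \<mu>) * exp (\<mu> * t))"
      by (intro sums_mult exp_converges)
    then show ?thesis
      using assms(2) by (simp add: power_mult_distrib field_simps flip: exp_add)
  qed
  have c_sums: "(\<lambda>k. c k * t ^ k) sums (pgf p t - exp (\<mu> * (t - 1)))" if "\<bar>t\<bar> \<le> 1" for t
    unfolding c_def left_diff_distrib by (intro sums_diff pgf_sums poisson_sums that)
  have "summable c"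
    using c_sums[of 1] by (simp add: sums_iff)
  moreover have "(\<lambda>k. c k * t ^ k) sums 0" if "0 < t" "t < 1" for t
    using c_sums[of t] in_Delta_pgf_eq_exp[OF assms, of t] that by simp
  ultimately show "pmf p k = pmf (poisson_pmf \<mu>) k" for k
    using powser_zero_on_unit_interval_imp_coeff_zero[of c k] unfolding c_def by simp
qed

section \<open>The statistic for large n\<close>

lemma fk_0: "fk 0 m = exp (- m)"
  by (simp add: fk_def)

lemma sig2_0: "sig2 0 m = exp (- 2 * m) * (exp m - 1 - m)"
  by (simp add: sig2_def)

lemma sig2_0_pos:
  assumes "0 < m"
  shows "0 < sig2 0 m"
proof -
  obtain t where "exp m = 1 + m + exp t / 2 * m\<^sup>2"
    by (rule exp_Maclaurin_2)
  with assms show ?thesis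
    by (simp add: sig2_0)
qed

lemma sig2_0_le_1:
  assumes "0 \<le> m"
  shows "sig2 0 m \<le> 1"
proof -
  have "sig2 0 m \<le> exp (- 2 * m) * exp m"
    using assms by (simp add: sig2_0)
  also have "\<dots> = exp (- m)"
    by (simp flip: exp_add)
  also have "\<dots> \<le> 1"
    using assms by simp
  finally show ?thesis .
qed

lemma kstar_eq_0:
  assumes "0 \<le> m" "exp (2 * m) \<le> sqrt n"
  shows "kstar n m = 0"
  unfolding kstar_def
proof (rule Least_eq_0)
  have n: "0 < sqrt n"
    using assms(2) exp_gt_zero[of "2 * m"] by linarith
  have fk_sq: "(fk 0 m)\<^sup>2 = exp (- 2 * m)"
    by (simp add: fk_0 power2_eq_square flip: exp_add)
  have "(if 1 \<le> m then 1 else 0) * sqrt (sig2 0 m) / ((fk 0 m)\<^sup>2 * sqrt n) \<le> 1 / ((fk 0 m)\<^sup>2 * sqrt n)"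
    using sig2_0_le_1[OF assms(1)] n by (intro divide_right_mono) (auto simp: fk_0)
  also have "\<dots> = exp (2 * m) / sqrt n"
    by (simp add: fk_sq exp_minus field_simps)
  also have "\<dots> \<le> 1"
    using assms(2) n by simp
  also have "\<dots> \<le> exp 1"
    by simp
  finally show "(if 1 \<le> m then 1 else 0) * sqrt (sig2 0 m) / ((fk 0 m)\<^sup>2 * sqrt n) \<le> exp 1" .
qed

lemma W_stat_eq_kstar_0:
  assumes "0 \<le> sample_mean X n \<omega>" "exp (2 * sample_mean X n \<omega>) \<le> sqrt n"
  shows "W_stat X n \<omega> = sqrt n * (exp (- sample_mean X n \<omega>) - emp_cdf X n 0 \<omega>)
    / sqrt (sig2 0 (sample_mean X n \<omega>))"
  by (simp add: W_stat_def Let_def kstar_eq_0[OF assms] fk_0)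

lemma W_stat_eq_if_sample_mean_close:
  assumes "0 < \<mu>" "\<bar>sample_mean X n \<omega> - \<mu>\<bar> \<le> \<mu> / 2" "\<bar>sample_mean X n \<omega> - \<mu>\<bar> \<le> 1"
    and "exp (2 * (\<mu> + 1)) \<le> sqrt n"
  shows "0 < sample_mean X n \<omega>"
    and "W_stat X n \<omega> = sqrt n * (exp (- sample_mean X n \<omega>) - emp_cdf X n 0 \<omega>)
      / sqrt (sig2 0 (sample_mean X n \<omega>))"
proof -
  show pos: "0 < sample_mean X n \<omega>"
    using assms(1,2) by (simp only: abs_le_iff) linarith
  have "exp (2 * sample_mean X n \<omega>) \<le> exp (2 * (\<mu> + 1))"
    using assms(3) by (simp add: abs_le_iff)
  also have "\<dots> \<le> sqrt n"
    by (rule assms(4))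
  finally show "W_stat X n \<omega> = sqrt n * (exp (- sample_mean X n \<omega>) - emp_cdf X n 0 \<omega>)
      / sqrt (sig2 0 (sample_mean X n \<omega>))"
    using pos by (intro W_stat_eq_kstar_0) auto
qed

lemma abs_W_stat_lower_bound:
  assumes "0 < \<mu>" "\<bar>sample_mean X n \<omega> - \<mu>\<bar> \<le> \<mu> / 2" "\<bar>sample_mean X n \<omega> - \<mu>\<bar> \<le> 1"
    and "exp (2 * (\<mu> + 1)) \<le> sqrt n"
  shows "sqrt n * (\<bar>exp (- \<mu>) - q\<bar> - \<bar>sample_mean X n \<omega> - \<mu>\<bar> - \<bar>emp_cdf X n 0 \<omega> - q\<bar>)
    \<le> \<bar>W_stat X n \<omega>\<bar>"
proof -
  define m where "m = sample_mean X n \<omega>"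
  define F where "F = emp_cdf X n 0 \<omega>"
  note W = W_stat_eq_if_sample_mean_close[OF assms, folded m_def F_def]
  have "\<bar>exp (- \<mu>) - q\<bar> - \<bar>m - \<mu>\<bar> - \<bar>F - q\<bar> \<le> \<bar>exp (- m) - F\<bar>"
    using abs_exp_neg_diff_le[of m \<mu>] W(1) assms(1)
      abs_triangle_ineq[of "exp (- \<mu>) - exp (- m)" "exp (- m) - F"]
      abs_triangle_ineq[of "exp (- \<mu>) - F" "F - q"]
    by (simp add: abs_minus_commute)
  then have "sqrt n * (\<bar>exp (- \<mu>) - q\<bar> - \<bar>m - \<mu>\<bar> - \<bar>F - q\<bar>) \<le> sqrt n * \<bar>exp (- m) - F\<bar>"
    by (rule mult_left_mono) simp
  also have "\<dots> \<le> sqrt n * \<bar>exp (- m) - F\<bar> / sqrt (sig2 0 m)"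
    using sig2_0_pos[OF W(1)] sig2_0_le_1[of m] W(1) by (simp add: le_divide_eq mult_left_le)
  also have "\<dots> = \<bar>W_stat X n \<omega>\<bar>"
    using sig2_0_pos[OF W(1)] by (simp add: W(2) abs_mult)
  finally show ?thesis
    by (simp add: m_def F_def)
qed

section \<open>Sample averages of iid sequences\<close>

lemma (in prob_space) prob_tendsto_0_if_covered:
  assumes cover: "\<forall>\<^sub>F n in sequentially. A n \<subseteq> B n \<union> C n"
    and events: "\<And>n. B n \<in> events" "\<And>n. C n \<in> events"
    and B: "(\<lambda>n. prob (B n)) \<longlonglongrightarrow> 0" and C: "(\<lambda>n. prob (C n)) \<longlonglongrightarrow> 0"
  shows "(\<lambda>n. prob (A n)) \<longlonglongrightarrow> 0"
proof (rule tendsto_sandwich[OF _ _ tendsto_const tendsto_add_zero[OF B C]])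
  show "\<forall>\<^sub>F n in sequentially. prob (A n) \<le> prob (B n) + prob (C n)"
    using cover
  proof eventually_elim
    case (elim n)
    then have "prob (A n) \<le> prob (B n \<union> C n)"
      using events by (intro finite_measure_mono) auto
    also have "\<dots> \<le> prob (B n) + prob (C n)"
      using events by (rule measure_Un_le)
    finally show ?case .
  qed
qed simp

locale iid = prob_space M for M :: "'a measure" +
  fixes X :: "nat \<Rightarrow> 'a \<Rightarrow> nat" and p :: "nat pmf"
  assumes measurable_X[measurable]: "\<And>i. X i \<in> measurable M (count_space UNIV)"
    and indep_X: "indep_vars (\<lambda>_. count_space UNIV) X UNIV"
    and distr_X: "\<And>i. distr M (count_space UNIV) (X i) = measure_pmf p"
begin

lemma integrable_comp_X_iff:
  "integrable M (\<lambda>\<omega>. g (X i \<omega>)) \<longleftrightarrow> integrable (measure_pmf p) g"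
  for g :: "nat \<Rightarrow> real"
  using integrable_distr_eq[of "X i" M "count_space UNIV" g] by (simp add: distr_X)

lemma expectation_comp_X:
  "expectation (\<lambda>\<omega>. g (X i \<omega>)) = measure_pmf.expectation p g"
  for g :: "nat \<Rightarrow> real"
  using integral_distr[of "X i" M "count_space UNIV" g] by (simp add: distr_X)

lemma indep_var_comp_X:
  fixes g :: "nat \<Rightarrow> real"
  assumes "i \<noteq> j"
  shows "indep_var borel (\<lambda>\<omega>. g (X i \<omega>)) borel (\<lambda>\<omega>. g (X j \<omega>))"
proof -
  have "indep_vars (\<lambda>_. borel) (\<lambda>k \<omega>. g (X k \<omega>)) (insert i {j})"
    by (rule indep_vars_subset[OF indep_vars_compose2[OF indep_X]]) auto
  from indep_vars_sum[OF _ _ this] assms show ?thesis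
    by simp
qed

lemma expectation_sum_square:
  fixes h :: "nat \<Rightarrow> real"
  assumes sq: "integrable (measure_pmf p) (\<lambda>k. (h k)\<^sup>2)"
    and centered: "measure_pmf.expectation p h = 0"
  shows "integrable M (\<lambda>\<omega>. (\<Sum>i<n. h (X i \<omega>))\<^sup>2)"
    and "expectation (\<lambda>\<omega>. (\<Sum>i<n. h (X i \<omega>))\<^sup>2) = n * measure_pmf.expectation p (\<lambda>k. (h k)\<^sup>2)"
proof -
  define V where "V = measure_pmf.expectation p (\<lambda>k. (h k)\<^sup>2)"
  have h: "integrable M (\<lambda>\<omega>. h (X i \<omega>))" for i
    using measure_pmf.square_integrable_imp_integrable[OF _ sq] by (simp add: integrable_comp_X_iff)
  have products: "integrable M (\<lambda>\<omega>. h (X i \<omega>) * h (X j \<omega>)) \<and>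
      expectation (\<lambda>\<omega>. h (X i \<omega>) * h (X j \<omega>)) = (if i = j then V else 0)" for i j
  proof (cases "i = j")
    case True
    then show ?thesis
      using sq integrable_comp_X_iff[of "\<lambda>k. (h k)\<^sup>2"] expectation_comp_X[of "\<lambda>k. (h k)\<^sup>2"]
      by (simp add: V_def power2_eq_square)
  next
    case False
    from indep_var_lebesgue_integral[OF indep_var_comp_X[OF False] h h]
      indep_var_integrable[OF indep_var_comp_X[OF False] h h] False
    show ?thesis
      by (simp add: expectation_comp_X centered)
  qed
  have square: "(\<Sum>i<n. h (X i \<omega>))\<^sup>2 = (\<Sum>i<n. \<Sum>j<n. h (X i \<omega>) * h (X j \<omega>))" for \<omega>
    by (simp add: power2_eq_square sum_product)
  show "integrable M (\<lambda>\<omega>. (\<Sum>i<n. h (X i \<omega>))\<^sup>2)"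
    unfolding square using products by auto
  show "expectation (\<lambda>\<omega>. (\<Sum>i<n. h (X i \<omega>))\<^sup>2) = n * V"
    unfolding square using products by (simp add: Bochner_Integration.integral_sum)
qed

lemma prob_sample_average_deviation_le:
  fixes g :: "nat \<Rightarrow> real"
  assumes sq: "integrable (measure_pmf p) (\<lambda>k. (g k)\<^sup>2)" and "d > 0" "n > 0"
  shows "prob {\<omega>\<in>space M. d \<le> \<bar>(\<Sum>i<n. g (X i \<omega>)) / n - measure_pmf.expectation p g\<bar>}
    \<le> measure_pmf.variance p g / (n * d\<^sup>2)"
proof -
  define c where "c = measure_pmf.expectation p g"
  define h where "h k = g k - c" for k
  have g: "integrable (measure_pmf p) g"
    by (rule measure_pmf.square_integrable_imp_integrable[OF _ sq]) simp
  have h_sq: "integrable (measure_pmf p) (\<lambda>k. (h k)\<^sup>2)"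
    using sq g unfolding h_def power2_diff by (intro Bochner_Integration.integrable_diff) auto
  have h_centered: "measure_pmf.expectation p h = 0"
    using g by (simp add: h_def[abs_def] c_def)
  have "{\<omega>\<in>space M. d \<le> \<bar>(\<Sum>i<n. g (X i \<omega>)) / n - c\<bar>} = {\<omega>\<in>space M. n * d \<le> \<bar>\<Sum>i<n. h (X i \<omega>)\<bar>}"
    using \<open>n > 0\<close> by (auto simp: h_def sum_subtractf field_simps abs_divide)
  also have "prob \<dots> \<le> expectation (\<lambda>\<omega>. (\<Sum>i<n. h (X i \<omega>))\<^sup>2) / (n * d)\<^sup>2"
    using assms expectation_sum_square(1)[OF h_sq h_centered] by (intro second_moment_method) auto
  also have "\<dots> = n * measure_pmf.expectation p (\<lambda>k. (h k)\<^sup>2) / (n * d)\<^sup>2"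
    by (simp add: expectation_sum_square(2)[OF h_sq h_centered])
  also have "\<dots> = measure_pmf.variance p g / (n * d\<^sup>2)"
    using \<open>n > 0\<close> by (simp add: h_def c_def power_mult_distrib power2_eq_square)
  finally show ?thesis
    by (simp add: c_def)
qed

lemma prob_sample_average_deviation_tendsto_0:
  fixes g :: "nat \<Rightarrow> real" and d :: "nat \<Rightarrow> real"
  assumes sq: "integrable (measure_pmf p) (\<lambda>k. (g k)\<^sup>2)"
    and d: "\<forall>\<^sub>F n in sequentially. d n > 0" "filterlim (\<lambda>n. n * (d n)\<^sup>2) at_top sequentially"
  shows "(\<lambda>n. prob {\<omega>\<in>space M. d n \<le> \<bar>(\<Sum>i<n. g (X i \<omega>)) / n - measure_pmf.expectation p g\<bar>})
    \<longlonglongrightarrow> 0"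
proof (rule tendsto_sandwich[OF _ _ tendsto_const])
  show "(\<lambda>n. measure_pmf.variance p g / (n * (d n)\<^sup>2)) \<longlonglongrightarrow> 0"
    by (rule tendsto_divide_0[OF tendsto_const filterlim_at_top_imp_at_infinity[OF d(2)]])
  show "\<forall>\<^sub>F n in sequentially. prob {\<omega>\<in>space M. d n \<le> \<bar>(\<Sum>i<n. g (X i \<omega>)) / n - measure_pmf.expectation p g\<bar>}
      \<le> measure_pmf.variance p g / (n * (d n)\<^sup>2)"
    using eventually_gt_at_top[of 0] d(1)
    by eventually_elim (rule prob_sample_average_deviation_le[OF sq])
qed simp

lemma measurable_W_stat[measurable]: "W_stat X n \<in> borel_measurable M"
proof -
  have "(\<lambda>\<omega>. map (\<lambda>i. X i \<omega>) [0..<n]) \<in> M \<rightarrow>\<^sub>M count_space UNIV"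
  proof (induction n)
    case (Suc n)
    have "(\<lambda>\<omega>. map (\<lambda>i. X i \<omega>) [0..<n] @ [X n \<omega>]) \<in> M \<rightarrow>\<^sub>M count_space UNIV"
      by (rule measurable_compose_countable[where g = "X n"])
         (auto intro: measurable_compose[OF Suc measurable_count_space])
    then show ?case by simp
  qed simp
  then have "(\<lambda>\<omega>. W_stat (\<lambda>i xs. xs ! i) n (map (\<lambda>i. X i \<omega>) [0..<n])) \<in> borel_measurable M"
    by (rule measurable_compose) simp
  moreover have "W_stat (\<lambda>i xs. xs ! i) n (map (\<lambda>i. X i \<omega>) [0..<n]) = W_stat X n \<omega>" for \<omega>
    by (simp add: W_stat_def sample_mean_def emp_cdf_def)
  ultimately show ?thesis
    by simp
qed

lemma measurable_sample_mean[measurable]: "sample_mean X n \<in> borel_measurable M"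
  unfolding sample_mean_def[abs_def] by measurable

lemma measurable_emp_cdf[measurable]: "emp_cdf X n k \<in> borel_measurable M"
  unfolding emp_cdf_def[abs_def] by measurable

lemma prob_sample_mean_deviation_tendsto_0:
  fixes d :: "nat \<Rightarrow> real"
  assumes "integrable (measure_pmf p) (\<lambda>k. (real k)\<^sup>2)"
    and "\<forall>\<^sub>F n in sequentially. d n > 0" "filterlim (\<lambda>n. n * (d n)\<^sup>2) at_top sequentially"
  shows "(\<lambda>n. prob {\<omega>\<in>space M. d n \<le> \<bar>sample_mean X n \<omega> - measure_pmf.expectation p real\<bar>})
    \<longlonglongrightarrow> 0"
  using prob_sample_average_deviation_tendsto_0[OF assms] by (simp add: sample_mean_def)

lemma prob_emp_cdf_0_deviation_tendsto_0:
  fixes d :: "nat \<Rightarrow> real"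
  assumes "\<forall>\<^sub>F n in sequentially. d n > 0" "filterlim (\<lambda>n. n * (d n)\<^sup>2) at_top sequentially"
  shows "(\<lambda>n. prob {\<omega>\<in>space M. d n \<le> \<bar>emp_cdf X n 0 \<omega> - pmf p 0\<bar>}) \<longlonglongrightarrow> 0"
proof -
  define g :: "nat \<Rightarrow> real" where "g k = (if k \<le> 0 then 1 else 0)" for k
  have "integrable (measure_pmf p) (\<lambda>k. (g k)\<^sup>2)"
    by (rule measure_pmf.integrable_const_bound[where B = 1]) (auto simp: g_def)
  moreover have "measure_pmf.expectation p g = pmf p 0"
    by (subst integral_measure_pmf_real[of "{0}"]) (auto simp: g_def split: if_splits)
  ultimately show ?thesis
    using prob_sample_average_deviation_tendsto_0[of g, OF _ assms] by (simp add: emp_cdf_def g_def)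
qed

end

section \<open>Divergence under the alternative\<close>

theorem (in iid) abs_W_stat_tends_to_infinity:
  assumes sq: "integrable (measure_pmf p) (\<lambda>k. (real k)\<^sup>2)"
    and pos: "0 < measure_pmf.expectation p real"
    and not_poisson_0: "pmf p 0 \<noteq> exp (- measure_pmf.expectation p real)"
  shows "abs_tends_to_infinity_in_prob M (W_stat X)"
  unfolding abs_tends_to_infinity_in_prob_def
proof
  fix C :: real
  define \<mu> where "\<mu> = measure_pmf.expectation p real"
  define c where "c = \<bar>exp (- \<mu>) - pmf p 0\<bar>"
  define d where "d = min (\<mu> / 2) (min 1 (c / 4))"
  have "0 < \<mu>" "0 < c" "0 < d"
    using pos not_poisson_0 by (auto simp: \<mu>_def c_def d_def)
  let ?far_mean = "\<lambda>n. {\<omega>\<in>space M. d \<le> \<bar>sample_mean X n \<omega> - \<mu>\<bar>}"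
  let ?far_cdf = "\<lambda>n. {\<omega>\<in>space M. c / 4 \<le> \<bar>emp_cdf X n 0 \<omega> - pmf p 0\<bar>}"
  show "(\<lambda>n. prob {\<omega>\<in>space M. \<bar>W_stat X n \<omega>\<bar> \<le> C}) \<longlonglongrightarrow> 0"
  proof (rule prob_tendsto_0_if_covered)
    have "filterlim (\<lambda>n. real n * d\<^sup>2) at_top sequentially"
      using \<open>0 < d\<close> by real_asymp
    with prob_sample_mean_deviation_tendsto_0[OF sq, of "\<lambda>_. d"] \<open>0 < d\<close>
    show "(\<lambda>n. prob (?far_mean n)) \<longlonglongrightarrow> 0"
      by (simp add: \<mu>_def)
    have "filterlim (\<lambda>n. real n * (c / 4)\<^sup>2) at_top sequentially"
      using \<open>0 < c\<close> by real_asymp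
    with prob_emp_cdf_0_deviation_tendsto_0[of "\<lambda>_. c / 4"] \<open>0 < c\<close>
    show "(\<lambda>n. prob (?far_cdf n)) \<longlonglongrightarrow> 0"
      by simp
    have "\<forall>\<^sub>F n in sequentially. exp (2 * (\<mu> + 1)) \<le> sqrt n"
      by real_asymp
    moreover have "\<forall>\<^sub>F n in sequentially. C < sqrt n * (c / 2)"
      using \<open>0 < c\<close> by real_asymp
    ultimately show "\<forall>\<^sub>F n in sequentially. {\<omega>\<in>space M. \<bar>W_stat X n \<omega>\<bar> \<le> C} \<subseteq> ?far_mean n \<union> ?far_cdf n"
    proof eventually_elim
      case (elim n)
      have "C < \<bar>W_stat X n \<omega>\<bar>" if "\<omega> \<notin> ?far_mean n" "\<omega> \<notin> ?far_cdf n" "\<omega> \<in> space M" for \<omega>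
      proof -
        have "\<bar>sample_mean X n \<omega> - \<mu>\<bar> < d" "\<bar>emp_cdf X n 0 \<omega> - pmf p 0\<bar> < c / 4"
          using that by auto
        then have "sqrt n * (c / 2) \<le> sqrt n * (c - \<bar>sample_mean X n \<omega> - \<mu>\<bar> - \<bar>emp_cdf X n 0 \<omega> - pmf p 0\<bar>)"
          by (intro mult_left_mono) (auto simp: d_def)
        also have "\<dots> \<le> \<bar>W_stat X n \<omega>\<bar>"
          unfolding c_def using \<open>0 < \<mu>\<close> \<open>\<bar>sample_mean X n \<omega> - \<mu>\<bar> < d\<close> elim(1)
          by (intro abs_W_stat_lower_bound) (auto simp: d_def)
        finally show ?thesis
          using elim(2) by linarith
      qed
      then show ?case
        by force
    qed
  qed measurable
qed

section \<open>Asymptotic normality under the Poisson hypothesis\<close>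

lemma isCont_cdf_std_normal: "isCont (cdf std_normal_distribution) x"
proof -
  interpret real_distribution std_normal_distribution
    by (rule real_dist_normal_dist)
  have "emeasure std_normal_distribution {x} = 0"
    by (simp add: emeasure_density nn_integral_null_set)
  then show ?thesis
    by (simp add: isCont_cdf measure_def)
qed

lemma (in prob_space) cdf_distr:
  assumes [measurable]: "f \<in> borel_measurable M"
  shows "cdf (distr M borel f) x = prob {\<omega>\<in>space M. f \<omega> \<le> x}"
  unfolding cdf_def by (subst measure_distr) (auto intro!: arg_cong[where f = prob])

lemma (in prob_space) prob_le_perturb:
  fixes f g :: "'a \<Rightarrow> real"
  assumes [measurable]: "f \<in> borel_measurable M" "g \<in> borel_measurable M"
  shows "prob {\<omega>\<in>space M. f \<omega> \<le> x} \<le> prob {\<omega>\<in>space M. g \<omega> \<le> y} + prob {\<omega>\<in>space M. y - x \<le> \<bar>f \<omega> - g \<omega>\<bar>}"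
proof -
  have "prob {\<omega>\<in>space M. f \<omega> \<le> x}
      \<le> prob ({\<omega>\<in>space M. g \<omega> \<le> y} \<union> {\<omega>\<in>space M. y - x \<le> \<bar>f \<omega> - g \<omega>\<bar>})"
    by (rule finite_measure_mono) auto
  also have "\<dots> \<le> prob {\<omega>\<in>space M. g \<omega> \<le> y} + prob {\<omega>\<in>space M. y - x \<le> \<bar>f \<omega> - g \<omega>\<bar>}"
    by (rule measure_Un_le) auto
  finally show ?thesis .
qed

lemma (in prob_space) weak_conv_m_if_close_in_prob:
  fixes Z W :: "nat \<Rightarrow> 'a \<Rightarrow> real"
  assumes [measurable]: "\<And>n. Z n \<in> borel_measurable M" "\<And>n. W n \<in> borel_measurable M"
    and conv: "weak_conv_m (\<lambda>n. distr M borel (Z n)) N"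
    and cont: "\<And>x. isCont (cdf N) x"
    and close: "\<And>e. e > 0 \<Longrightarrow> (\<lambda>n. prob {\<omega>\<in>space M. e \<le> \<bar>W n \<omega> - Z n \<omega>\<bar>}) \<longlonglongrightarrow> 0"
  shows "weak_conv_m (\<lambda>n. distr M borel (W n)) N"
  unfolding weak_conv_m_def weak_conv_def cdf_distr[OF assms(2)]
proof (intro allI impI order_tendstoI)
  fix x a b :: real
  have Z: "(\<lambda>n. prob {\<omega>\<in>space M. Z n \<omega> \<le> y}) \<longlonglongrightarrow> cdf N y" for y
    using conv cont by (simp add: weak_conv_m_def weak_conv_def cdf_distr)
  have close': "(\<lambda>n. prob {\<omega>\<in>space M. \<bar>y - x\<bar> \<le> \<bar>W n \<omega> - Z n \<omega>\<bar>}) \<longlonglongrightarrow> 0" if "y \<noteq> x" for y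
    using close[of "\<bar>y - x\<bar>"] that by simp
  {
    assume "cdf N x < b"
    then obtain y where "x < y" "cdf N y < b"
      by (rule isCont_below_on_right[OF cont])
    then have "\<forall>\<^sub>F n in sequentially. prob {\<omega>\<in>space M. Z n \<omega> \<le> y}
        + prob {\<omega>\<in>space M. y - x \<le> \<bar>W n \<omega> - Z n \<omega>\<bar>} < b"
      using tendsto_add[OF Z close'[of y]] by (intro order_tendstoD(2)) auto
    then show "\<forall>\<^sub>F n in sequentially. prob {\<omega>\<in>space M. W n \<omega> \<le> x} < b"
    proof eventually_elim
      case (elim n)
      then show ?case
        using prob_le_perturb[of "W n" "Z n" x y] by simp
    qed
  next
    assume "a < cdf N x"
    then obtain y where "y < x" "a < cdf N y"
      by (rule isCont_above_on_left[OF cont])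
    then have "\<forall>\<^sub>F n in sequentially. a < prob {\<omega>\<in>space M. Z n \<omega> \<le> y}
        - prob {\<omega>\<in>space M. x - y \<le> \<bar>W n \<omega> - Z n \<omega>\<bar>}"
      using tendsto_diff[OF Z close'[of y]] by (intro order_tendstoD(1)) (auto simp: abs_minus_commute)
    then show "\<forall>\<^sub>F n in sequentially. a < prob {\<omega>\<in>space M. W n \<omega> \<le> x}"
    proof eventually_elim
      case (elim n)
      then show ?case
        using prob_le_perturb[of "Z n" "W n" y x] by (simp add: abs_minus_commute)
    qed
  }
qed

lemma pmf_poisson_Suc:
  assumes "0 < \<mu>"
  shows "pmf (poisson_pmf \<mu>) (Suc k) * real (Suc k) = \<mu> * pmf (poisson_pmf \<mu>) k"
proof -
  have "(fact (Suc k) :: real) = real (Suc k) * fact k"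
    by (simp only: fact_Suc of_nat_mult of_nat_fact)
  then show ?thesis
    using assms by (simp add: field_simps del: of_nat_Suc)
qed

lemma expectation_poisson_square:
  assumes "0 < \<mu>" and sq: "integrable (measure_pmf (poisson_pmf \<mu>)) (\<lambda>k. (real k)\<^sup>2)"
  shows "measure_pmf.expectation (poisson_pmf \<mu>) (\<lambda>k. (real k)\<^sup>2) = \<mu> * (\<mu> + 1)"
proof -
  let ?P = "pmf (poisson_pmf \<mu>)"
  have "(\<lambda>k. ?P (Suc k) * real (Suc k)) sums (\<mu> * 1)"
    unfolding pmf_poisson_Suc[OF assms(1)] by (intro sums_mult pmf_nat_sums_one)
  then have mean: "(\<lambda>k. ?P k * real k) sums \<mu>"
    using sums_Suc_iff[of "\<lambda>k. ?P k * real k"] by simp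
  have "(\<lambda>k. ?P (Suc k) * real (Suc k) * real (Suc k)) sums (\<mu> * (\<mu> + 1))"
    unfolding pmf_poisson_Suc[OF assms(1)]
    using sums_mult[OF sums_add[OF mean pmf_nat_sums_one], of \<mu>]
    by (simp add: algebra_simps)
  then have "(\<lambda>k. ?P k * (real k)\<^sup>2) sums (\<mu> * (\<mu> + 1))"
    using sums_Suc_iff[of "\<lambda>k. ?P k * (real k)\<^sup>2"] by (simp add: power2_eq_square mult.assoc)
  then show ?thesis
    using sums_expectation_pmf_nat[OF sq] by (rule sums_unique2[symmetric])
qed

text \<open>Linearising exp (- m) at \<mu> turns exp (- sample_mean X n) - emp_cdf X n 0 into the sample
  mean of these summands.\<close>
definition W_influence :: "real \<Rightarrow> nat \<Rightarrow> real" where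
  "W_influence \<mu> k = exp (- \<mu>) * (1 + \<mu> - real k) - (if k = 0 then 1 else 0)"

lemma sum_W_influence:
  "(\<Sum>i<n. W_influence \<mu> (X i \<omega>))
    = n * (exp (- \<mu>) * (1 + \<mu> - sample_mean X n \<omega>) - emp_cdf X n 0 \<omega>)"
proof (cases "n = 0")
  case False
  have "(\<Sum>i<n. W_influence \<mu> (X i \<omega>)) = n * (exp (- \<mu>) * (1 + \<mu>))
      - exp (- \<mu>) * (\<Sum>i<n. real (X i \<omega>)) - (\<Sum>i<n. if X i \<omega> \<le> 0 then 1 else 0)"
    by (simp add: W_influence_def sum_subtractf sum.distrib sum_distrib_left algebra_simps)
  also have "\<dots> = n * (exp (- \<mu>) * (1 + \<mu> - sample_mean X n \<omega>) - emp_cdf X n 0 \<omega>)"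
    using False by (simp add: sample_mean_def emp_cdf_def field_simps)
  finally show ?thesis .
qed simp

lemma W_influence_square:
  "(W_influence \<mu> k)\<^sup>2 = exp (- 2 * \<mu>) * ((1 + \<mu>)\<^sup>2 - 2 * (1 + \<mu>) * real k + (real k)\<^sup>2)
     + (1 - 2 * exp (- \<mu>) * (1 + \<mu>)) * (if k = 0 then 1 else 0)"
  by (cases k) (simp_all add: W_influence_def power2_eq_square algebra_simps flip: exp_add)

lemma
  assumes "0 < \<mu>" and sq: "integrable (measure_pmf (poisson_pmf \<mu>)) (\<lambda>k. (real k)\<^sup>2)"
    and mean: "measure_pmf.expectation (poisson_pmf \<mu>) real = \<mu>"
  shows integrable_W_influence_square:
      "integrable (measure_pmf (poisson_pmf \<mu>)) (\<lambda>k. (W_influence \<mu> k)\<^sup>2)"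
    and expectation_W_influence:
      "measure_pmf.expectation (poisson_pmf \<mu>) (W_influence \<mu>) = 0"
    and expectation_W_influence_square:
      "measure_pmf.expectation (poisson_pmf \<mu>) (\<lambda>k. (W_influence \<mu> k)\<^sup>2) = sig2 0 \<mu>"
proof -
  let ?E = "measure_pmf.expectation (poisson_pmf \<mu>)"
  have real: "integrable (measure_pmf (poisson_pmf \<mu>)) real"
    by (rule measure_pmf.square_integrable_imp_integrable[OF _ sq]) simp
  have zero: "integrable (measure_pmf (poisson_pmf \<mu>)) (\<lambda>k. if k = 0 then 1 else 0 :: real)"
    by (rule measure_pmf.integrable_const_bound[where B = 1]) auto
  have P0: "?E (\<lambda>k. if k = 0 then 1 else 0) = exp (- \<mu>)"
    using assms(1) by (subst integral_measure_pmf_real[of "{0}"]) (auto split: if_splits)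
  show "integrable (measure_pmf (poisson_pmf \<mu>)) (\<lambda>k. (W_influence \<mu> k)\<^sup>2)"
    unfolding W_influence_square using sq real zero by simp
  show "?E (W_influence \<mu>) = 0"
    unfolding W_influence_def[abs_def] using real zero by (simp add: mean P0 algebra_simps)
  have "?E (\<lambda>k. (W_influence \<mu> k)\<^sup>2)
      = exp (- 2 * \<mu>) * ((1 + \<mu>)\<^sup>2 - 2 * (1 + \<mu>) * \<mu> + \<mu> * (\<mu> + 1))
        + (1 - 2 * exp (- \<mu>) * (1 + \<mu>)) * exp (- \<mu>)"
    unfolding W_influence_square using sq real zero
    by (simp add: mean P0 expectation_poisson_square[OF assms(1,2)])
  also have "\<dots> = sig2 0 \<mu>"
    by (simp add: sig2_0 power2_eq_square algebra_simps flip: exp_add)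
  finally show "?E (\<lambda>k. (W_influence \<mu> k)\<^sup>2) = sig2 0 \<mu>" .
qed

lemma inverse_sqrt_sig2_0_local_Lipschitz:
  assumes "0 < \<mu>"
  obtains r L where "0 < r" "0 \<le> L"
    "\<And>m. \<bar>m - \<mu>\<bar> < r \<Longrightarrow> \<bar>1 / sqrt (sig2 0 m) - 1 / sqrt (sig2 0 \<mu>)\<bar> \<le> L * \<bar>m - \<mu>\<bar>"
proof -
  have "DERIV (sig2 0) \<mu> :> exp (- 2 * \<mu>) * (exp \<mu> - 1) - 2 * sig2 0 \<mu>"
    unfolding sig2_0[abs_def] by (auto intro!: derivative_eq_intros simp: algebra_simps)
  from DERIV_chain2[OF DERIV_real_sqrt[OF sig2_0_pos[OF assms]] this]
  have "DERIV (\<lambda>m. sqrt (sig2 0 m)) \<mu> :> inverse (sqrt (sig2 0 \<mu>)) / 2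
      * (exp (- 2 * \<mu>) * (exp \<mu> - 1) - 2 * sig2 0 \<mu>)" .
  from DERIV_divide[OF DERIV_const this] sig2_0_pos[OF assms]
  obtain D where "DERIV (\<lambda>m. 1 / sqrt (sig2 0 m)) \<mu> :> D"
    by fastforce
  then obtain r where "0 < r" "\<And>m. \<bar>m - \<mu>\<bar> < r \<Longrightarrow>
      \<bar>1 / sqrt (sig2 0 m) - 1 / sqrt (sig2 0 \<mu>)\<bar> \<le> (\<bar>D\<bar> + 1) * \<bar>m - \<mu>\<bar>"
    by (rule DERIV_local_Lipschitz) blast
  then show thesis
    by (intro that[of r "\<bar>D\<bar> + 1"]) auto
qed

text \<open>Replacing exp (- m) by its tangent at \<mu> and \<phi> m by \<phi> \<mu> costs an error quadratic in the
  deviations.\<close>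
lemma linearization_error_le:
  fixes \<phi> :: "real \<Rightarrow> real"
  assumes "0 \<le> \<mu>" "\<bar>m - \<mu>\<bar> \<le> \<delta>" "\<delta> \<le> 1" "\<bar>F - exp (- \<mu>)\<bar> \<le> \<delta>" "0 \<le> s" "0 \<le> L"
    and lipschitz: "\<bar>\<phi> m - \<phi> \<mu>\<bar> \<le> L * \<bar>m - \<mu>\<bar>"
  shows "\<bar>s * (exp (- m) - F) * \<phi> m - s * (exp (- \<mu>) * (1 + \<mu> - m) - F) * \<phi> \<mu>\<bar>
    \<le> s * \<delta>\<^sup>2 * (2 * \<bar>\<phi> \<mu>\<bar> + 4 * L)"
proof -
  define R where "R = exp (- m) - exp (- \<mu>) * (1 + \<mu> - m)"
  define T where "T = exp (- \<mu>) * (1 + \<mu> - m) - F"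
  have "\<bar>R\<bar> \<le> 2 * (m - \<mu>)\<^sup>2"
    unfolding R_def using assms(1-3) by (intro abs_exp_neg_tangent_error_le) auto
  also have "\<dots> \<le> 2 * \<delta>\<^sup>2"
    using power_mono[OF assms(2), of 2] by simp
  finally have R: "\<bar>R\<bar> \<le> 2 * \<delta>\<^sup>2" .
  have "T = (exp (- \<mu>) - F) + exp (- \<mu>) * (\<mu> - m)"
    by (simp add: T_def algebra_simps)
  then have "\<bar>T\<bar> \<le> \<bar>exp (- \<mu>) - F\<bar> + \<bar>exp (- \<mu>) * (\<mu> - m)\<bar>"
    by (simp only: abs_triangle_ineq)
  also have "\<dots> = \<bar>exp (- \<mu>) - F\<bar> + exp (- \<mu>) * \<bar>m - \<mu>\<bar>"
    by (simp add: abs_mult abs_minus_commute)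
  also have "\<dots> \<le> \<delta> + 1 * \<delta>"
    using assms(1,2,4) by (intro add_mono mult_mono) (auto simp: abs_minus_commute)
  finally have T: "\<bar>T\<bar> \<le> 2 * \<delta>"
    by simp
  have lip: "\<bar>\<phi> m - \<phi> \<mu>\<bar> \<le> L * \<delta>"
    using lipschitz assms(2,6) by (meson mult_left_mono order_trans)
  then have phi: "\<bar>\<phi> m\<bar> \<le> \<bar>\<phi> \<mu>\<bar> + L"
    using assms(3,6) mult_left_le[of \<delta> L] by linarith
  have "s * (exp (- m) - F) * \<phi> m - s * T * \<phi> \<mu> = s * (R * \<phi> m + T * (\<phi> m - \<phi> \<mu>))"
    by (simp add: R_def T_def algebra_simps)
  then have "\<bar>s * (exp (- m) - F) * \<phi> m - s * T * \<phi> \<mu>\<bar> = s * \<bar>R * \<phi> m + T * (\<phi> m - \<phi> \<mu>)\<bar>"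
    using assms(5) by (simp add: abs_mult)
  also have "\<dots> \<le> s * (2 * \<delta>\<^sup>2 * (\<bar>\<phi> \<mu>\<bar> + L) + 2 * \<delta> * (L * \<delta>))"
    using R T phi lip assms(5)
    by (intro mult_left_mono order_trans[OF abs_triangle_ineq add_mono])
       (auto simp: abs_mult intro!: mult_mono)
  also have "\<dots> = s * \<delta>\<^sup>2 * (2 * \<bar>\<phi> \<mu>\<bar> + 4 * L)"
    by (simp add: power2_eq_square algebra_simps)
  finally show ?thesis
    by (simp add: T_def)
qed

lemma W_stat_linearization_error_le:
  assumes "0 < \<mu>"
    and lipschitz: "\<And>m. \<bar>m - \<mu>\<bar> < r \<Longrightarrow>
      \<bar>1 / sqrt (sig2 0 m) - 1 / sqrt (sig2 0 \<mu>)\<bar> \<le> L * \<bar>m - \<mu>\<bar>"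
    and close: "\<bar>sample_mean X n \<omega> - \<mu>\<bar> \<le> \<delta>" "\<bar>emp_cdf X n 0 \<omega> - exp (- \<mu>)\<bar> \<le> \<delta>"
    and small: "\<delta> \<le> 1" "\<delta> \<le> \<mu> / 2" "\<delta> < r" and "0 \<le> L"
    and large: "exp (2 * (\<mu> + 1)) \<le> sqrt n"
  shows "\<bar>W_stat X n \<omega> - (\<Sum>i<n. W_influence \<mu> (X i \<omega>)) / sqrt (n * sig2 0 \<mu>)\<bar>
    \<le> sqrt n * \<delta>\<^sup>2 * (2 / sqrt (sig2 0 \<mu>) + 4 * L)"
proof -
  define m where "m = sample_mean X n \<omega>"
  define F where "F = emp_cdf X n 0 \<omega>"
  have close': "\<bar>m - \<mu>\<bar> \<le> \<mu> / 2" "\<bar>m - \<mu>\<bar> \<le> 1"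
    using close(1) small by (auto simp: m_def)
  note W_eq = W_stat_eq_if_sample_mean_close[OF \<open>0 < \<mu>\<close> close'[unfolded m_def] large, folded m_def F_def]
  have W: "W_stat X n \<omega> = sqrt n * (exp (- m) - F) * (1 / sqrt (sig2 0 m))"
    by (simp add: W_eq(2))
  have "(\<Sum>i<n. W_influence \<mu> (X i \<omega>)) / sqrt (n * sig2 0 \<mu>)
      = n / sqrt n * (exp (- \<mu>) * (1 + \<mu> - m) - F) * (1 / sqrt (sig2 0 \<mu>))"
    by (simp add: sum_W_influence m_def F_def real_sqrt_mult)
  also have "n / sqrt n = sqrt n"
    by (simp add: real_div_sqrt)
  finally have Z: "(\<Sum>i<n. W_influence \<mu> (X i \<omega>)) / sqrt (n * sig2 0 \<mu>)
      = sqrt n * (exp (- \<mu>) * (1 + \<mu> - m) - F) * (1 / sqrt (sig2 0 \<mu>))" .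
  show ?thesis
    unfolding W Z
    using linearization_error_le[of \<mu> m \<delta> F "sqrt n" L "\<lambda>m. 1 / sqrt (sig2 0 m)"]
      assms lipschitz[of m] sig2_0_pos[OF \<open>0 < \<mu>\<close>]
    by (simp add: m_def F_def)
qed

lemma W_stat_linearization_error_le_rate:
  assumes "0 < \<mu>"
    and lipschitz: "\<And>m. \<bar>m - \<mu>\<bar> < r \<Longrightarrow>
      \<bar>1 / sqrt (sig2 0 m) - 1 / sqrt (sig2 0 \<mu>)\<bar> \<le> L * \<bar>m - \<mu>\<bar>"
    and close: "\<bar>sample_mean X n \<omega> - \<mu>\<bar> < \<epsilon> / sqrt (sqrt n)"
      "\<bar>emp_cdf X n 0 \<omega> - exp (- \<mu>)\<bar> < \<epsilon> / sqrt (sqrt n)"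
    and small: "0 < \<epsilon>" "\<epsilon> \<le> 1" "\<epsilon> \<le> \<mu> / 2" "\<epsilon> < r" and "0 \<le> L"
    and large: "0 < n" "exp (2 * (\<mu> + 1)) \<le> sqrt n"
  shows "\<bar>W_stat X n \<omega> - (\<Sum>i<n. W_influence \<mu> (X i \<omega>)) / sqrt (n * sig2 0 \<mu>)\<bar>
    \<le> \<epsilon>\<^sup>2 * (2 / sqrt (sig2 0 \<mu>) + 4 * L)"
proof -
  define \<delta> where "\<delta> = \<epsilon> / sqrt (sqrt n)"
  have "1 \<le> sqrt (sqrt n)"
    using large(1) by simp
  then have "\<delta> \<le> \<epsilon>"
    using small(1) by (simp add: \<delta>_def divide_le_eq mult_le_cancel_left1)
  then have "\<bar>W_stat X n \<omega> - (\<Sum>i<n. W_influence \<mu> (X i \<omega>)) / sqrt (n * sig2 0 \<mu>)\<bar>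
      \<le> sqrt n * \<delta>\<^sup>2 * (2 / sqrt (sig2 0 \<mu>) + 4 * L)"
    using close small \<open>0 \<le> L\<close> large(2) unfolding \<delta>_def[symmetric]
    by (intro W_stat_linearization_error_le[OF \<open>0 < \<mu>\<close> lipschitz]) auto
  also have "sqrt n * \<delta>\<^sup>2 = \<epsilon>\<^sup>2"
    using large(1) by (simp add: \<delta>_def power_divide)
  finally show ?thesis .
qed

context iid
begin

lemma weak_conv_W_influence_sum:
  assumes sq: "integrable (measure_pmf p) (\<lambda>k. (real k)\<^sup>2)"
    and mean: "measure_pmf.expectation p real = \<mu>" and "0 < \<mu>" and poisson: "p = poisson_pmf \<mu>"
  shows "weak_conv_m (\<lambda>n. distr M borel (\<lambda>\<omega>. (\<Sum>i<n. W_influence \<mu> (X i \<omega>)) / sqrt (n * sig2 0 \<mu>)))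
    std_normal_distribution"
proof -
  have sq': "integrable (measure_pmf (poisson_pmf \<mu>)) (\<lambda>k. (real k)\<^sup>2)"
    and mean': "measure_pmf.expectation (poisson_pmf \<mu>) real = \<mu>"
    using sq mean by (simp_all add: poisson)
  note moments = integrable_W_influence_square[OF \<open>0 < \<mu>\<close> sq' mean']
    expectation_W_influence[OF \<open>0 < \<mu>\<close> sq' mean']
    expectation_W_influence_square[OF \<open>0 < \<mu>\<close> sq' mean']
  have "weak_conv_m (\<lambda>n. distr M borel (\<lambda>\<omega>. (\<Sum>i<n. W_influence \<mu> (X i \<omega>) - 0)
      / sqrt (n * (sqrt (sig2 0 \<mu>))\<^sup>2))) std_normal_distribution"
  proof (rule central_limit_theorem)
    show "indep_vars (\<lambda>i. borel) (\<lambda>i \<omega>. W_influence \<mu> (X i \<omega>)) UNIV"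
      by (rule indep_vars_compose2[OF indep_X]) auto
    show "integrable M (\<lambda>\<omega>. (W_influence \<mu> (X i \<omega>))\<^sup>2)" for i
      using moments(1) integrable_comp_X_iff[of "\<lambda>k. (W_influence \<mu> k)\<^sup>2" i] by (simp add: poisson)
    show "expectation (\<lambda>\<omega>. W_influence \<mu> (X i \<omega>)) = 0" for i
      using moments(2) expectation_comp_X[of "W_influence \<mu>" i] by (simp add: poisson)
    show "variance (\<lambda>\<omega>. W_influence \<mu> (X i \<omega>)) = (sqrt (sig2 0 \<mu>))\<^sup>2" for i
      using moments(2,3) sig2_0_pos[OF \<open>0 < \<mu>\<close>]
      by (simp add: expectation_comp_X[of "\<lambda>k. (W_influence \<mu> k)\<^sup>2"] expectation_comp_X poisson)
    show "distr M borel (\<lambda>\<omega>. W_influence \<mu> (X i \<omega>)) = distr (measure_pmf p) borel (W_influence \<mu>)" for i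
      using distr_distr[of "W_influence \<mu>" "count_space UNIV" borel "X i" M]
      by (simp add: distr_X comp_def)
  qed (use sig2_0_pos[OF \<open>0 < \<mu>\<close>] in simp)
  then show ?thesis
    using sig2_0_pos[OF \<open>0 < \<mu>\<close>] by simp
qed

lemma prob_W_stat_far_from_W_influence_sum_tendsto_0:
  assumes sq: "integrable (measure_pmf p) (\<lambda>k. (real k)\<^sup>2)"
    and mean: "measure_pmf.expectation p real = \<mu>" and "0 < \<mu>" and poisson: "p = poisson_pmf \<mu>"
    and "0 < e"
  shows "(\<lambda>n. prob {\<omega>\<in>space M.
    e \<le> \<bar>W_stat X n \<omega> - (\<Sum>i<n. W_influence \<mu> (X i \<omega>)) / sqrt (n * sig2 0 \<mu>)\<bar>}) \<longlonglongrightarrow> 0"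
proof -
  obtain r L where "0 < r" "0 \<le> L" and lipschitz: "\<And>m. \<bar>m - \<mu>\<bar> < r \<Longrightarrow>
      \<bar>1 / sqrt (sig2 0 m) - 1 / sqrt (sig2 0 \<mu>)\<bar> \<le> L * \<bar>m - \<mu>\<bar>"
    using inverse_sqrt_sig2_0_local_Lipschitz[OF \<open>0 < \<mu>\<close>] by blast
  define K where "K = 2 / sqrt (sig2 0 \<mu>) + 4 * L"
  have "0 < K"
    using sig2_0_pos[OF \<open>0 < \<mu>\<close>] \<open>0 \<le> L\<close> by (simp add: K_def add_pos_nonneg)
  have "\<forall>\<^sub>F \<epsilon> in at_right 0. 0 < \<epsilon> \<and> \<epsilon> \<le> 1 \<and> \<epsilon> \<le> \<mu> / 2 \<and> \<epsilon> < r \<and> \<epsilon>\<^sup>2 * K < e"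
    using \<open>0 < r\<close> \<open>0 < \<mu>\<close> \<open>0 < e\<close> \<open>0 < K\<close> by (intro eventually_conj; real_asymp)
  then obtain \<epsilon> where \<epsilon>: "0 < \<epsilon>" "\<epsilon> \<le> 1" "\<epsilon> \<le> \<mu> / 2" "\<epsilon> < r" "\<epsilon>\<^sup>2 * K < e"
    using eventually_happens'[OF trivial_limit_at_right_real] by blast
  define d where "d n = \<epsilon> / sqrt (sqrt n)" for n :: nat
  have d: "\<forall>\<^sub>F n in sequentially. 0 < d n" "filterlim (\<lambda>n. n * (d n)\<^sup>2) at_top sequentially"
    using \<epsilon>(1) unfolding d_def by real_asymp+
  show ?thesis
  proof (rule prob_tendsto_0_if_covered)
    show "(\<lambda>n. prob {\<omega>\<in>space M. d n \<le> \<bar>sample_mean X n \<omega> - \<mu>\<bar>}) \<longlonglongrightarrow> 0"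
      using prob_sample_mean_deviation_tendsto_0[OF sq d] by (simp add: mean)
    show "(\<lambda>n. prob {\<omega>\<in>space M. d n \<le> \<bar>emp_cdf X n 0 \<omega> - exp (- \<mu>)\<bar>}) \<longlonglongrightarrow> 0"
      using prob_emp_cdf_0_deviation_tendsto_0[OF d] \<open>0 < \<mu>\<close> by (simp add: poisson)
    have "\<forall>\<^sub>F n in sequentially. exp (2 * (\<mu> + 1)) \<le> sqrt n"
      by real_asymp
    with eventually_gt_at_top[of 0]
    show "\<forall>\<^sub>F n in sequentially.
      {\<omega>\<in>space M. e \<le> \<bar>W_stat X n \<omega> - (\<Sum>i<n. W_influence \<mu> (X i \<omega>)) / sqrt (n * sig2 0 \<mu>)\<bar>}
      \<subseteq> {\<omega>\<in>space M. d n \<le> \<bar>sample_mean X n \<omega> - \<mu>\<bar>}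
        \<union> {\<omega>\<in>space M. d n \<le> \<bar>emp_cdf X n 0 \<omega> - exp (- \<mu>)\<bar>}"
    proof eventually_elim
      case (elim n)
      have "\<bar>W_stat X n \<omega> - (\<Sum>i<n. W_influence \<mu> (X i \<omega>)) / sqrt (n * sig2 0 \<mu>)\<bar> < e"
        if "\<bar>sample_mean X n \<omega> - \<mu>\<bar> < d n" "\<bar>emp_cdf X n 0 \<omega> - exp (- \<mu>)\<bar> < d n" for \<omega>
        using W_stat_linearization_error_le_rate[OF \<open>0 < \<mu>\<close> lipschitz that[unfolded d_def] \<epsilon>(1-4)
            \<open>0 \<le> L\<close> elim] \<epsilon>(5)
        by (simp add: K_def)
      then show ?case
        by (force simp: not_le)
    qed
  qed measurable
qed

end

theorem (in iid) weak_conv_W_stat_poisson: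
  assumes "integrable (measure_pmf p) (\<lambda>k. (real k)\<^sup>2)"
    and "measure_pmf.expectation p real = \<mu>" "0 < \<mu>" "p = poisson_pmf \<mu>"
  shows "weak_conv_m (\<lambda>n. distr M borel (W_stat X n)) std_normal_distribution"
  by (rule weak_conv_m_if_close_in_prob[OF _ _ weak_conv_W_influence_sum[OF assms]
        isCont_cdf_std_normal prob_W_stat_far_from_W_influence_sum_tendsto_0[OF assms]])
     measurable

theorem corollary2:
  fixes M :: "'a measure" and X :: "nat \<Rightarrow> 'a \<Rightarrow> nat" and p :: "nat pmf"
  assumes "prob_space M"
    and "\<And>i. X i \<in> measurable M (count_space UNIV)"
    and "prob_space.indep_vars M (\<lambda>_. count_space UNIV) X UNIV"
    and "\<And>i. distr M (count_space UNIV) (X i) = measure_pmf p"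
    and "integrable (measure_pmf p) (\<lambda>k. (real k)\<^sup>2)"
    and "measure_pmf.expectation p real > 0"
  shows "(p = poisson_pmf (measure_pmf.expectation p real) \<longrightarrow>
            weak_conv_m (\<lambda>n. distr M borel (W_stat X n)) std_normal_distribution)
       \<and> (in_Delta p \<and> (\<forall>r>0. p \<noteq> poisson_pmf r) \<longrightarrow>
            abs_tends_to_infinity_in_prob M (W_stat X))"
proof -
  interpret iid M X p
    using assms(1-4) by (simp add: iid_def iid_axioms_def)
  show ?thesis
  proof (intro conjI impI)
    assume "p = poisson_pmf (measure_pmf.expectation p real)"
    then show "weak_conv_m (\<lambda>n. distr M borel (W_stat X n)) std_normal_distribution"
      using weak_conv_W_stat_poisson[OF assms(5) refl assms(6)] by simp
  next
    assume H1: "in_Delta p \<and> (\<forall>r>0. p \<noteq> poisson_pmf r)"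
    then have "pmf p 0 \<noteq> exp (- measure_pmf.expectation p real)"
      using in_Delta_imp_poisson assms(6) by blast
    then show "abs_tends_to_infinity_in_prob M (W_stat X)"
      by (rule abs_W_stat_tends_to_infinity[OF assms(5,6)])
  qed
qed

end
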